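(* Let $p\ge2$ be an integer and consider the $p$-Pass algorithm run with arbitrary orderings of $V$ in each pass. For every $1\le i\le p-1$ and every $\alpha\ge0$: if $\sum_{j=1}^ik_j\ge k\big(\frac ip+\alpha\big)$, then $$f(S_i)\ge\Big(1-\big(\tfrac{p}{p+1}\big)^i+\alpha\big(\tfrac{p}{p+1}\big)^{i+1}\Big)\mathrm{OPT}.$$
   Context: $V$ is a finite ground set with $|V|=n$; $f:2^V\to\mathbb{R}_{\ge0}$ is monotone, submodular and normalized; $f(e\mid Y)=f(Y\cup\{e\})-f(Y)$. $k\le n$ is a positive integer and $\mathrm{OPT}=\max\{f(S):S\subseteq V,|S|\le k\}$. $p$-Pass algorithm (knows $\mathrm{OPT}$): start with $S=\emptyset$; for $i=1,\dots,p$, make a pass over all elements of $V$ (in some order) and add each element $e$ to $S$ if $|S|<k$ and $f(e\mid S)\ge(\frac{p}{p+1})^i\cdot\frac{\mathrm{OPT}}{k}$; return $S$. $S_i$ denotes the set $S$ after the $i$-th pass ($S_0=\emptyset$) and $k_i=|S_i\setminus S_{i-1}|$. *)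

theory Defs
  imports Complex_Main
begin

definition monotone_set_fn :: "'a set \<Rightarrow> ('a set \<Rightarrow> real) \<Rightarrow> bool" where
  "monotone_set_fn V f \<longleftrightarrow> (\<forall>A B. A \<subseteq> B \<and> B \<subseteq> V \<longrightarrow> f A \<le> f B)"

definition submodular_set_fn :: "'a set \<Rightarrow> ('a set \<Rightarrow> real) \<Rightarrow> bool" where
  "submodular_set_fn V f \<longleftrightarrow>
     (\<forall>A B. A \<subseteq> V \<and> B \<subseteq> V \<longrightarrow> f (A \<union> B) + f (A \<inter> B) \<le> f A + f B)"

definition marg :: "('a set \<Rightarrow> real) \<Rightarrow> 'a \<Rightarrow> 'a set \<Rightarrow> real" where
  "marg f e Y = f (Y \<union> {e}) - f Y"

definition OPT :: "'a set \<Rightarrow> ('a set \<Rightarrow> real) \<Rightarrow> nat \<Rightarrow> real" where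
  "OPT V f k = Max (f ` {S. S \<subseteq> V \<and> card S \<le> k})"

definition pass_step :: "('a set \<Rightarrow> real) \<Rightarrow> nat \<Rightarrow> real \<Rightarrow> 'a \<Rightarrow> 'a set \<Rightarrow> 'a set" where
  "pass_step f k tau e S = (if card S < k \<and> marg f e S \<ge> tau then S \<union> {e} else S)"

definition run_pass :: "('a set \<Rightarrow> real) \<Rightarrow> nat \<Rightarrow> real \<Rightarrow> 'a list \<Rightarrow> 'a set \<Rightarrow> 'a set" where
  "run_pass f k tau xs S = fold (pass_step f k tau) xs S"

text \<open>S_i of the p-Pass algorithm (knowing OPT); ord i is the ordering used in pass i.\<close>
fun pPass_S :: "'a set \<Rightarrow> ('a set \<Rightarrow> real) \<Rightarrow> nat \<Rightarrow> nat \<Rightarrow> (nat \<Rightarrow> 'a list) \<Rightarrow> nat \<Rightarrow> 'a set" where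
  "pPass_S V f k p ord 0 = {}"
| "pPass_S V f k p ord (Suc i) =
     run_pass f k ((real p / (real p + 1)) ^ Suc i * OPT V f k / real k) (ord (Suc i))
       (pPass_S V f k p ord i)"

definition pPass_k :: "'a set \<Rightarrow> ('a set \<Rightarrow> real) \<Rightarrow> nat \<Rightarrow> nat \<Rightarrow> (nat \<Rightarrow> 'a list) \<Rightarrow> nat \<Rightarrow> nat" where
  "pPass_k V f k p ord i = card (pPass_S V f k p ord i - pPass_S V f k p ord (i - 1))"

end

theory Submission
  imports Defs
begin

text \<open>
  Let \<open>q = p/(p+1)\<close>, so that pass \<open>i\<close> uses the threshold \<open>q\<^sup>i OPT/k\<close> and
  \<open>1 - q = q/p\<close>. We prove the stronger bound \<open>f(S\<^sub>i) \<ge> (1 - q\<^sup>i + \<alpha> q\<^sup>i) OPT\<close> by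
  induction on \<open>i\<close>. Write \<open>k\<^sub>i\<^sub>+\<^sub>1 = x k\<close>; pass \<open>i+1\<close> gains at least \<open>x q\<^sup>i\<^sup>+\<^sup>1 OPT\<close>.
  If \<open>x - 1/p \<le> \<alpha>\<close>, the hypothesis for \<open>i\<close> holds with \<open>\<alpha> - (x - 1/p)\<close> in place of
  \<open>\<alpha>\<close>, and the two bounds add up. Otherwise \<open>k\<^sub>i\<^sub>+\<^sub>1 > 0\<close>, so \<open>S\<^sub>i\<close> is not full; then
  every element of an optimal set outside \<open>S\<^sub>i\<close> was rejected in pass \<open>i\<close> against a subset
  of \<open>S\<^sub>i\<close>, so submodularity gives \<open>f(S\<^sub>i) \<ge> (1 - q\<^sup>i) OPT\<close>, and adding the gain of
  pass \<open>i+1\<close> again suffices.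
\<close>

lemma subset_run_pass: "S \<subseteq> run_pass f k \<tau> xs S"
  by (induction xs arbitrary: S) (auto simp: run_pass_def pass_step_def, blast)

lemma run_pass_subset: "run_pass f k \<tau> xs S \<subseteq> S \<union> set xs"
proof (induction xs arbitrary: S)
  case Nil
  then show ?case by (simp add: run_pass_def)
next
  case (Cons x xs)
  have "pass_step f k \<tau> x S \<subseteq> insert x S"
    by (auto simp: pass_step_def)
  then show ?case
    using Cons.IH[of "pass_step f k \<tau> x S"] by (auto simp: run_pass_def)
qed

lemma run_pass_full: "k \<le> card S \<Longrightarrow> run_pass f k \<tau> xs S = S"
  by (induction xs) (auto simp: run_pass_def pass_step_def)

lemma run_pass_gain:
  assumes "finite S"
  shows "f S + real (card (run_pass f k \<tau> xs S - S)) * \<tau> \<le> f (run_pass f k \<tau> xs S)"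
  using assms
proof (induction xs arbitrary: S)
  case Nil
  show ?case by (simp add: run_pass_def)
next
  case (Cons e xs)
  define S' where "S' = pass_step f k \<tau> e S"
  define R where "R = run_pass f k \<tau> xs S'"
  have R_eq: "run_pass f k \<tau> (e # xs) S = R"
    by (simp add: run_pass_def R_def S'_def)
  have "finite S'"
    using Cons.prems by (simp add: S'_def pass_step_def)
  have S'_gain: "f S + real (card (S' - S)) * \<tau> \<le> f S'"
  proof (cases "S' = S")
    case False
    then have "S' - S = {e}" "S' = S \<union> {e}" "\<tau> \<le> marg f e S"
      by (auto simp: S'_def pass_step_def split: if_splits)
    then show ?thesis by (simp add: marg_def)
  qed simp
  have "S \<subseteq> S'" "S' \<subseteq> R"
    by (auto simp: S'_def pass_step_def R_def subset_run_pass)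
  moreover have "finite R"
    using run_pass_subset[of f k \<tau> xs S'] \<open>finite S'\<close> by (auto simp: R_def intro: finite_subset)
  ultimately have "card (R - S) = card (R - S') + card (S' - S)"
    by (subst card_Un_disjoint[symmetric]) (auto intro: arg_cong[where f = card] finite_subset)
  then show ?case
    using Cons.IH[OF \<open>finite S'\<close>] S'_gain by (simp add: R_eq R_def distrib_right)
qed

lemma run_pass_rejected:
  assumes "e \<in> set xs" "e \<notin> run_pass f k \<tau> xs S"
  obtains S' where "S \<subseteq> S'" "S' \<subseteq> run_pass f k \<tau> xs S" "\<not> (card S' < k \<and> \<tau> \<le> marg f e S')"
  using assms
proof (induction xs arbitrary: S)
  case (Cons x xs)
  define S\<^sub>x where "S\<^sub>x = pass_step f k \<tau> x S"
  have run_eq: "run_pass f k \<tau> (x # xs) S = run_pass f k \<tau> xs S\<^sub>x"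
    by (simp add: run_pass_def S\<^sub>x_def)
  have "S \<subseteq> S\<^sub>x" "S\<^sub>x \<subseteq> run_pass f k \<tau> xs S\<^sub>x"
    by (auto simp: S\<^sub>x_def pass_step_def subset_run_pass)
  show ?case
  proof (cases "e \<in> set xs")
    case True
    then show ?thesis
      using Cons.IH[of S\<^sub>x] Cons.prems \<open>S \<subseteq> S\<^sub>x\<close> run_eq by (metis order_trans)
  next
    case False
    then have "e = x"
      using Cons.prems by simp
    then have "\<not> (card S < k \<and> \<tau> \<le> marg f e S)"
      using Cons.prems(3) run_eq \<open>S\<^sub>x \<subseteq> run_pass f k \<tau> xs S\<^sub>x\<close>
      by (auto simp: S\<^sub>x_def pass_step_def)
    then show ?thesis
      using Cons.prems(1) \<open>S \<subseteq> S\<^sub>x\<close> \<open>S\<^sub>x \<subseteq> run_pass f k \<tau> xs S\<^sub>x\<close> run_eq by auto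
  qed
qed simp

lemma marg_antimono:
  assumes mono: "monotone_set_fn V f" and submod: "submodular_set_fn V f"
    and "A \<subseteq> B" "B \<subseteq> V" "e \<in> V"
  shows "marg f e B \<le> marg f e A"
proof (cases "e \<in> B")
  case True
  then have "f A \<le> f (A \<union> {e})"
    using mono assms(3-5) unfolding monotone_set_fn_def by blast
  then show ?thesis
    using True by (simp add: marg_def insert_absorb)
next
  case False
  have "(A \<union> {e}) \<union> B = B \<union> {e}" "(A \<union> {e}) \<inter> B = A"
    using assms(3) False by auto
  then have "f (B \<union> {e}) + f A \<le> f (A \<union> {e}) + f B"
    using submod assms(3-5) unfolding submodular_set_fn_def by (metis Un_least order_trans singletonD subsetI)
  then show ?thesis by (simp add: marg_def)
qed

lemma submodular_Un_le_sum_marg: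
  assumes "monotone_set_fn V f" "submodular_set_fn V f" "finite T" "T \<subseteq> V" "S \<subseteq> V"
  shows "f (S \<union> T) \<le> f S + (\<Sum>e\<in>T. marg f e S)"
  using assms(3,4)
proof (induction T rule: finite_induct)
  case (insert x T)
  have "f (S \<union> insert x T) = f (S \<union> T) + marg f x (S \<union> T)"
    by (simp add: marg_def Un_insert_right)
  also have "marg f x (S \<union> T) \<le> marg f x S"
    using marg_antimono[OF assms(1,2)] insert.prems assms(5) by auto
  finally show ?case
    using insert by simp
qed simp

lemma run_pass_marg_below:
  assumes "monotone_set_fn V f" "submodular_set_fn V f" "finite S" "S \<subseteq> V" "set xs \<subseteq> V"
    and "card (run_pass f k \<tau> xs S) < k" "e \<in> set xs" "e \<notin> run_pass f k \<tau> xs S"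
  shows "marg f e (run_pass f k \<tau> xs S) < \<tau>"
proof -
  let ?R = "run_pass f k \<tau> xs S"
  obtain S' where S': "S \<subseteq> S'" "S' \<subseteq> ?R" "\<not> (card S' < k \<and> \<tau> \<le> marg f e S')"
    using run_pass_rejected[OF assms(7,8)] .
  have "?R \<subseteq> V" "finite ?R"
    using run_pass_subset[of f k \<tau> xs S] assms(3-5) by (auto intro: finite_subset)
  then have "card S' < k"
    using card_mono[OF _ S'(2)] assms(6) by simp
  then have "marg f e S' < \<tau>"
    using S'(3) by simp
  moreover have "marg f e ?R \<le> marg f e S'"
    using marg_antimono[OF assms(1,2) S'(2) \<open>?R \<subseteq> V\<close>] assms(5,7) by auto
  ultimately show ?thesis by simp
qed

lemma OPT_attained:
  assumes "finite V"
  obtains Opt where "Opt \<subseteq> V" "card Opt \<le> k" "f Opt = OPT V f k"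
proof -
  let ?F = "{S. S \<subseteq> V \<and> card S \<le> k}"
  have "finite (f ` ?F)" "f ` ?F \<noteq> {}"
    using assms by auto
  then have "OPT V f k \<in> f ` ?F"
    unfolding OPT_def by (rule Max_in)
  then show ?thesis
    using that by auto
qed

lemma OPT_nonneg:
  assumes "finite V" "f {} = 0"
  shows "0 \<le> OPT V f k"
proof -
  have "f {} \<in> f ` {S. S \<subseteq> V \<and> card S \<le> k}"
    by auto
  then show ?thesis
    using assms unfolding OPT_def by (metis Max_ge finite_Collect_subsets finite_Collect_conjI finite_imageI)
qed

lemma threshold_step_identities:
  fixes c r Q W x \<alpha> :: real
  assumes "c + r * c = 1"
  shows "(1 - Q + (\<alpha> - (x - r)) * Q) * W + x * (Q * c) * W
      = (1 - Q * c + \<alpha> * (Q * c)) * W + Q * W * ((\<alpha> - (x - r)) * (1 - c))"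
    and "(1 - Q) * W + x * (Q * c) * W
      = (1 - Q * c + \<alpha> * (Q * c)) * W + Q * W * ((x - r - \<alpha>) * c)"
  using arg_cong[OF assms, of "(*) (Q * W)"] by (simp_all add: algebra_simps)

locale p_pass =
  fixes V :: "'a set" and f :: "'a set \<Rightarrow> real" and k p :: nat and ord :: "nat \<Rightarrow> 'a list"
  assumes finite_V: "finite V"
    and mono: "monotone_set_fn V f" and submod: "submodular_set_fn V f" and f_empty: "f {} = 0"
    and k_pos: "0 < k" and p_pos: "0 < p"
    and set_ord: "\<And>j. 1 \<le> j \<Longrightarrow> j \<le> p \<Longrightarrow> set (ord j) = V"
begin

abbreviation S where "S \<equiv> pPass_S V f k p ord"
abbreviation added where "added \<equiv> pPass_k V f k p ord"
abbreviation q where "q \<equiv> real p / (real p + 1)"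
abbreviation threshold where "threshold j \<equiv> q ^ j * OPT V f k / real k"

lemma q_bounds: "0 \<le> q" "q \<le> 1"
  by auto

lemma q_plus_q_div_p: "q + 1 / real p * q = 1"
  using p_pos by (simp add: field_simps)

lemma OPT_ge0: "0 \<le> OPT V f k"
  using finite_V f_empty by (rule OPT_nonneg)

lemma S_subset_V: "j \<le> p \<Longrightarrow> S j \<subseteq> V"
proof (induction j)
  case (Suc j)
  then show ?case
    using run_pass_subset[of f k _ "ord (Suc j)" "S j"] set_ord[of "Suc j"] by auto
qed simp

lemma finite_S: "j \<le> p \<Longrightarrow> finite (S j)"
  using S_subset_V finite_V finite_subset by blast

lemma added_Suc: "added (Suc j) = card (S (Suc j) - S j)"
  by (simp add: pPass_k_def)

lemma f_S_Suc_ge: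
  assumes "j < p"
  shows "f (S j) + real (added (Suc j)) * threshold (Suc j) \<le> f (S (Suc j))"
proof -
  from assms have "j \<le> p" by simp
  from run_pass_gain[OF finite_S[OF this]] show ?thesis
    unfolding added_Suc pPass_S.simps(2) .
qed

lemma added_Suc_full: "k \<le> card (S j) \<Longrightarrow> added (Suc j) = 0"
  using run_pass_full[of k "S j"] by (simp add: added_Suc)

lemma f_S_ge_unsaturated:
  assumes "l \<le> p" "card (S l) < k"
  shows "(1 - q ^ l) * OPT V f k \<le> f (S l)"
proof (cases l)
  case 0
  then show ?thesis by (simp add: f_empty)
next
  case (Suc j)
  obtain Opt where Opt: "Opt \<subseteq> V" "card Opt \<le> k" "f Opt = OPT V f k"
    using OPT_attained[OF finite_V] .
  define T where "T = Opt - S l"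
  have T: "finite T" "T \<subseteq> V" "card T \<le> k"
    using Opt finite_V finite_subset card_mono[of Opt T] unfolding T_def by fastforce+
  have marg_T: "marg f e (S l) \<le> threshold l" if "e \<in> T" for e
    using run_pass_marg_below[OF mono submod finite_S S_subset_V, of j "ord l" k]
      set_ord[of l] assms Suc that T(2) unfolding T_def by fastforce
  have "Opt \<subseteq> S l \<union> T" "S l \<union> T \<subseteq> V"
    using S_subset_V[OF assms(1)] T(2) unfolding T_def by auto
  then have "OPT V f k \<le> f (S l \<union> T)"
    using mono Opt(3) unfolding monotone_set_fn_def by metis
  also have "\<dots> \<le> f (S l) + (\<Sum>e\<in>T. marg f e (S l))"
    using submodular_Un_le_sum_marg[OF mono submod T(1,2) S_subset_V[OF assms(1)]] .
  also have "\<dots> \<le> f (S l) + real (card T) * threshold l"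
    using sum_mono[OF marg_T] by simp
  also have "\<dots> \<le> f (S l) + real k * threshold l"
    using T(3) OPT_ge0 by (intro add_left_mono mult_right_mono) auto
  finally show ?thesis
    using k_pos by (simp add: algebra_simps)
qed

lemma f_S_lower_bound:
  assumes "i \<le> p" "0 \<le> \<alpha>" "real k * (real i / real p + \<alpha>) \<le> real (\<Sum>j=1..i. added j)"
  shows "(1 - q ^ i + \<alpha> * q ^ i) * OPT V f k \<le> f (S i)"
  using assms
proof (induction i arbitrary: \<alpha>)
  case 0
  then have "\<alpha> = 0"
    using k_pos by (simp add: mult_le_0_iff)
  then show ?case by (simp add: f_empty)
next
  case (Suc i)
  define x where "x = real (added (Suc i)) / real k"
  define r where "r = 1 / real p"
  define Q where "Q = q ^ i"
  define W where "W = OPT V f k"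
  have q_plus_r_times_q: "q + r * q = 1"
    unfolding r_def by (rule q_plus_q_div_p)
  have "0 \<le> Q" "0 \<le> W"
    using q_bounds OPT_ge0 by (auto simp: Q_def W_def)
  have goal: "1 - q ^ Suc i + \<alpha> * q ^ Suc i = 1 - Q * q + \<alpha> * (Q * q)"
    by (simp add: Q_def mult.commute)
  have gain: "f (S i) + x * (Q * q) * W \<le> f (S (Suc i))"
    using f_S_Suc_ge[of i] Suc.prems(1) k_pos by (simp add: x_def Q_def W_def mult_ac)
  have sum_split: "real k * (real i / real p + (\<alpha> - (x - r))) \<le> real (\<Sum>j=1..i. added j)"
    using Suc.prems(3) k_pos by (simp add: x_def r_def add_divide_distrib algebra_simps)
  show ?case
  proof (cases "x - r \<le> \<alpha>")
    case True
    define \<beta> where "\<beta> = \<alpha> - (x - r)"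
    have "(1 - Q + \<beta> * Q) * W \<le> f (S i)"
      using Suc.IH[of \<beta>] Suc.prems(1) True sum_split by (simp add: \<beta>_def Q_def W_def)
    moreover have "0 \<le> Q * W * (\<beta> * (1 - q))"
      using True q_bounds \<open>0 \<le> Q\<close> \<open>0 \<le> W\<close> by (simp add: \<beta>_def)
    ultimately have "(1 - Q * q + \<alpha> * (Q * q)) * W \<le> f (S i) + x * (Q * q) * W"
      using threshold_step_identities(1)[OF q_plus_r_times_q, where Q = Q and W = W and x = x and \<alpha> = \<alpha>, folded \<beta>_def] by linarith
    then show ?thesis
      unfolding goal W_def[symmetric] using gain by linarith
  next
    case False
    have "0 < r"
      using p_pos by (simp add: r_def)
    then have "0 < x"
      using False Suc.prems(2) by linarith
    then have "added (Suc i) \<noteq> 0"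
      by (auto simp: x_def zero_less_divide_iff)
    then have "card (S i) < k"
      using added_Suc_full[of i] by (meson not_le)
    then have "(1 - Q) * W \<le> f (S i)"
      unfolding Q_def W_def using Suc.prems(1) by (intro f_S_ge_unsaturated) simp_all
    moreover have "0 \<le> Q * W * ((x - r - \<alpha>) * q)"
      using False \<open>0 \<le> Q\<close> \<open>0 \<le> W\<close> q_bounds(1) by (intro mult_nonneg_nonneg) auto
    ultimately have "(1 - Q * q + \<alpha> * (Q * q)) * W \<le> f (S i) + x * (Q * q) * W"
      using threshold_step_identities(2)[OF q_plus_r_times_q, where Q = Q and W = W and x = x and \<alpha> = \<alpha>] by linarith
    then show ?thesis
      unfolding goal W_def[symmetric] using gain by linarith
  qed
qed

end

theorem mainTheorem18:
  fixes V :: "'a set" and f :: "'a set \<Rightarrow> real" and k p i :: nat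
    and ord :: "nat \<Rightarrow> 'a list" and \<alpha> :: real
  assumes "finite V"
    and "\<forall>S. S \<subseteq> V \<longrightarrow> f S \<ge> 0"
    and "monotone_set_fn V f" and "submodular_set_fn V f" and "f {} = 0"
    and "0 < k" and "k \<le> card V"
    and "2 \<le> p"
    and "\<forall>j. 1 \<le> j \<and> j \<le> p \<longrightarrow> distinct (ord j) \<and> set (ord j) = V"
    and "1 \<le> i" and "i \<le> p - 1"
    and "0 \<le> \<alpha>"
    and "real (\<Sum>j=1..i. pPass_k V f k p ord j) \<ge> real k * (real i / real p + \<alpha>)"
  shows "f (pPass_S V f k p ord i) \<ge>
    (1 - (real p / (real p + 1)) ^ i + \<alpha> * (real p / (real p + 1)) ^ (i + 1)) * OPT V f k"
proof -
  interpret p_pass V f k p ord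
    using assms by unfold_locales auto
  have "\<alpha> * q ^ (i + 1) \<le> \<alpha> * q ^ i"
    using assms(12) by (intro mult_left_mono power_decreasing) simp_all
  then have "(1 - q ^ i + \<alpha> * q ^ (i + 1)) * OPT V f k \<le> (1 - q ^ i + \<alpha> * q ^ i) * OPT V f k"
    using OPT_ge0 by (intro mult_right_mono) auto
  also have "\<dots> \<le> f (S i)"
    using f_S_lower_bound assms(11-13) by simp
  finally show ?thesis .
qed

end
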